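(* Let $d\ge2$. There is a constant $C_d>0$ depending only on $d$ such that for all $N\in\mathbb{N}$, all $X\in\mathcal X_N$ and all $z\in\mathbb{Z}^d$, $$\#\big(X\,\Delta\,(z+(B_{r_N}\cap\mathbb{Z}^d))\big)\le|\zeta(X)\,\Delta\,(B_{r_N}+z)|+C_dN^{\frac{d-1}{d}}P_N(X),$$ where $B_{r_N}$ is the closed Euclidean ball centered at $0$ with $|B_{r_N}|=N$.
   Context: $\mathcal X_N$ is the family of subsets of $\mathbb{Z}^d$ with exactly $N$ elements. For $X\subset\mathbb{Z}^d$ and $p\in X$, $\mathrm{val}(p)=\#\{q\in\mathbb{Z}^d\setminus X:|p-q|=1\}$, $P(X)=\sum_{p\in X}\mathrm{val}(p)$, and for $X\in\mathcal X_N$, $P_N(X)=N^{-(d-1)/d}P(X)$. Kuhn decomposition: for a permutation $\pi$ of $\{1,\dots,d\}$, $T_\pi=\{x\in\mathbb{R}^d:0\le x_{\pi(d)}\le\dots\le x_{\pi(1)}\le1\}$, $\mathcal{T}=\{z+T_\pi:z\in\mathbb{Z}^d,\pi\}$, $\mathcal T(i)=\{T\in\mathcal T:i\in T\}$, and $\zeta(X)=\bigcup_{i\in X}\bigcup_{T\in\mathcal T(i)}T$. $|\cdot|$ is Lebesgue measure, $\#$ cardinality, $\Delta$ symmetric difference. *)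

theory Defs
  imports "HOL-Analysis.Analysis"
begin

definition rvec :: "int ^ 'n \<Rightarrow> real ^ 'n" where
  "rvec z = (\<chi> i. real_of_int (z $ i))"

definition symdiff :: "'a set \<Rightarrow> 'a set \<Rightarrow> 'a set" where
  "symdiff A B = (A - B) \<union> (B - A)"

definition XN :: "nat \<Rightarrow> (int ^ 'n) set set" where
  "XN N = {X. finite X \<and> card X = N}"

definition val :: "(int ^ 'n) set \<Rightarrow> int ^ 'n \<Rightarrow> nat" where
  "val X p = card {q. q \<notin> X \<and> norm (rvec p - rvec q) = 1}"

definition Per :: "(int ^ 'n) set \<Rightarrow> nat" where
  "Per X = (\<Sum>p\<in>X. val X p)"

definition PerN :: "nat \<Rightarrow> (int ^ 'n) set \<Rightarrow> real" where
  "PerN N X = real N powr (- (real CARD('n) - 1) / real CARD('n)) * real (Per X)"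

text \<open>Kuhn simplex for an enumeration p of the coordinates (p k plays the role of \<pi>(k+1)):
  0 \<le> x_{p(d-1)} \<le> ... \<le> x_{p 0} \<le> 1.\<close>
definition kuhn_simplex :: "(nat \<Rightarrow> 'n::finite) \<Rightarrow> (real ^ 'n) set" where
  "kuhn_simplex p = {x. 0 \<le> x $ p (CARD('n) - 1) \<and>
      (\<forall>k. Suc k < CARD('n) \<longrightarrow> x $ p (Suc k) \<le> x $ p k) \<and> x $ p 0 \<le> 1}"

definition kuhn :: "(real ^ 'n::finite) set set" where
  "kuhn = {(\<lambda>x. rvec z + x) ` kuhn_simplex p | z p. bij_betw p {..<CARD('n)} (UNIV :: 'n set)}"

definition kuhn_at :: "int ^ 'n::finite \<Rightarrow> (real ^ 'n) set set" where
  "kuhn_at i = {T \<in> kuhn. rvec i \<in> T}"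

definition zeta :: "(int ^ 'n::finite) set \<Rightarrow> (real ^ 'n) set" where
  "zeta X = (\<Union>i\<in>X. \<Union>T\<in>kuhn_at i. T)"

definition rN :: "nat \<Rightarrow> real" where
  "rN N = (THE r. r \<ge> 0 \<and> measure lebesgue (cball (0 :: real ^ 'n::finite) r) = real N)"

end

(*
  Let Q_i be the half-open unit cube centred at i, i.e. the fibre of rounding to the nearest
  lattice point; then #S = |Q_S| for finite S, where Q_S is the union of the Q_i with i in S,
  and S |-> Q_S commutes with all set operations. For the lattice points Y of the ball B,
  #(X \<Delta> Y) = |Q_X \<Delta> Q_Y|, and the triangle inequality for |_ \<Delta> _| bounds this by
  |Q_X \<Delta> \<zeta>(X)| + |\<zeta>(X) \<Delta> B| + |B \<Delta> Q_Y|.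
  Since Q_X \<subseteq> \<zeta>(X) \<subseteq> Q_{X'} with X' the l\<infinity>-neighbourhood of X, the first term is at most
  #(X' - X) \<le> 3^d P(X). The last term is at most the number of cells meeting both B and its
  complement; they lie in an annulus of width 2d around the sphere, so there are O(r^(d-1)) of them,
  and r^(d-1) ~ N^((d-1)/d) \<le> P(X) by the discrete isoperimetric inequality N^(d-1) \<le> P(X)^d,
  which follows Loomis-Whitney style by slicing X along one coordinate at a time.
  Finally N^((d-1)/d) P_N(X) = P(X).
*)

theory Submission
  imports Defs
begin

lemma rvec_nth [simp]: "rvec z $ k = real_of_int (z $ k)"
  by (simp add: rvec_def)

lemma rvec_add: "rvec (a + b) = rvec a + rvec b"
  by (simp add: vec_eq_iff)

lemma rvec_diff: "rvec (a - b) = rvec a - rvec b"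
  by (simp add: vec_eq_iff)

lemma norm_rvec_axis: "norm (rvec (axis k s)) = \<bar>real_of_int s\<bar>"
proof -
  have "rvec (axis k s) = real_of_int s *\<^sub>R axis k 1"
    by (simp add: vec_eq_iff axis_def)
  then show ?thesis by simp
qed

lemma lattice_box_eq_image:
  "{v :: int^'n::finite. \<forall>k. v $ k \<in> A k} = vec_lambda ` PiE UNIV A"
  by (auto simp: image_iff intro!: bexI[of _ "vec_nth v" for v])

lemma finite_lattice_box:
  "(\<And>k. finite (A k)) \<Longrightarrow> finite {v :: int^'n::finite. \<forall>k. v $ k \<in> A k}"
  unfolding lattice_box_eq_image by (intro finite_imageI finite_PiE) auto

lemma card_lattice_box:
  "(\<And>k. finite (A k)) \<Longrightarrow> card {v :: int^'n::finite. \<forall>k. v $ k \<in> A k} = (\<Prod>k\<in>UNIV. card (A k))"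
  unfolding lattice_box_eq_image
  by (subst card_image) (auto simp: card_PiE inj_on_def vec_eq_iff)

lemma finite_lattice_cball: "finite {i :: int^'n::finite. rvec i \<in> cball c R}"
proof (rule finite_subset[OF _ finite_lattice_box])
  show "{i. rvec i \<in> cball c R} \<subseteq> {v. \<forall>k. v $ k \<in> {\<lfloor>c $ k - R\<rfloor>..\<lceil>c $ k + R\<rceil>}}"
  proof safe
    fix i :: "int^'n" and k assume "rvec i \<in> cball c R"
    then have "\<bar>(rvec i - c) $ k\<bar> \<le> R"
      by (metis component_le_norm_cart dist_norm mem_cball norm_minus_commute order_trans)
    then show "i $ k \<in> {\<lfloor>c $ k - R\<rfloor>..\<lceil>c $ k + R\<rceil>}"
      by (auto simp: floor_le_iff le_ceiling_iff abs_le_iff)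
  qed
qed simp

lemma finite_lattice_points_bounded:
  fixes B :: "(real^'n::finite) set"
  assumes "bounded B" shows "finite {i :: int^'n. rvec i \<in> B}"
proof -
  obtain c R where "B \<subseteq> cball c R"
    using assms unfolding bounded_subset_cball by blast
  then show ?thesis by (intro finite_subset[OF _ finite_lattice_cball]) auto
qed

section \<open>Lattice cells\<close>

definition lattice_round :: "real^'n::finite \<Rightarrow> int^'n" where
  "lattice_round x = (\<chi> k. \<lfloor>x $ k + 1/2\<rfloor>)"

lemma lattice_round_eq_iff:
  "lattice_round x = i \<longleftrightarrow> (\<forall>k. real_of_int (i $ k) - 1/2 \<le> x $ k \<and> x $ k < real_of_int (i $ k) + 1/2)"
proof -
  have round_eq: "\<lfloor>t + 1/2\<rfloor> = n \<longleftrightarrow> real_of_int n - 1/2 \<le> t \<and> t < real_of_int n + 1/2" for t :: real and n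
    by (auto simp: floor_eq_iff)
  show ?thesis unfolding lattice_round_def vec_eq_iff vec_lambda_beta round_eq ..
qed

lemma lattice_round_rvec [simp]: "lattice_round (rvec i) = i"
  by (simp add: lattice_round_eq_iff)

lemma abs_sub_lattice_round: "\<bar>x $ k - real_of_int (lattice_round x $ k)\<bar> \<le> 1/2"
proof -
  have "real_of_int (lattice_round x $ k) - 1/2 \<le> x $ k \<and> x $ k < real_of_int (lattice_round x $ k) + 1/2"
    using lattice_round_eq_iff[of x "lattice_round x"] by simp
  then show ?thesis unfolding abs_le_iff by linarith
qed

lemma lattice_cell_lmeasurable: "lattice_round -` {i} \<in> lmeasurable"
  and measure_lattice_cell: "measure lebesgue (lattice_round -` {i}) = 1"
proof -
  define a b where "a = rvec i - (\<chi> k. 1/2)" and "b = rvec i + (\<chi> k. 1/2)"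
  have "box a b \<subseteq> lattice_round -` {i}" "lattice_round -` {i} \<subseteq> cbox a b"
    unfolding subset_iff vimage_singleton_eq lattice_round_eq_iff a_def b_def mem_box_cart
    by (simp_all add: less_imp_le)
  then have neg: "negligible (cbox a b - lattice_round -` {i} \<union> (lattice_round -` {i} - cbox a b))"
    by (auto intro: negligible_subset[OF negligible_frontier_interval])
  show "lattice_round -` {i} \<in> lmeasurable"
    by (rule lmeasurable_negligible_symdiff[OF lmeasurable_cbox neg])
  have "cbox a b \<noteq> {}" by (simp add: a_def b_def interval_ne_empty_cart)
  then have "measure lebesgue (cbox a b) = 1"
    by (simp add: content_cbox_cart a_def b_def)
  then show "measure lebesgue (lattice_round -` {i}) = 1"
    using measure_negligible_symdiff[OF lmeasurable_cbox neg] by simp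
qed

lemma lattice_cells_UN: "lattice_round -` S = (\<Union>i\<in>S. lattice_round -` {i})"
  by blast

lemma lmeasurable_lattice_cells: "finite S \<Longrightarrow> lattice_round -` S \<in> lmeasurable"
  by (subst lattice_cells_UN) (auto intro: lattice_cell_lmeasurable)

lemma measure_lattice_cells:
  assumes "finite S" shows "measure lebesgue (lattice_round -` S) = real (card S)"
proof -
  have "lattice_round -` {a} \<inter> lattice_round -` {b} = {}" if "a \<noteq> b" for a b
    using that by auto
  then have "pairwise (\<lambda>a b. negligible (lattice_round -` {a} \<inter> lattice_round -` {b})) S"
    unfolding pairwise_def by (metis negligible_empty)
  then show ?thesis
    by (subst lattice_cells_UN, subst measure_negligible_finite_Union_image)
       (simp_all add: assms lattice_cell_lmeasurable measure_lattice_cell)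
qed

section \<open>Kuhn simplices\<close>

lemma kuhn_simplex_mono:
  assumes "x \<in> kuhn_simplex p" "j \<le> k" "k < CARD('n)"
  shows "x $ p k \<le> x $ (p j :: 'n::finite)"
proof (rule lift_Suc_antimono_le_ivl[of "{k. Suc k < CARD('n)}" "\<lambda>k. x $ p k"])
  show "x $ p (Suc m) \<le> x $ p m" if "m \<in> {k. Suc k < CARD('n)}" for m
    using assms(1) that unfolding kuhn_simplex_def by blast
qed (use assms in auto)

lemma kuhn_simplex_subset_unit_cube:
  assumes "bij_betw p {..<CARD('n)} (UNIV :: 'n::finite set)"
  shows "kuhn_simplex p \<subseteq> cbox (0 :: real^'n) 1"
proof (clarsimp simp: mem_box_cart)
  fix x :: "real^'n" and m assume x: "x \<in> kuhn_simplex p"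
  obtain k where k: "k < CARD('n)" "m = p k"
    using assms by (metis UNIV_I bij_betw_iff_bijections lessThan_iff)
  then have "x $ p (CARD('n) - 1) \<le> x $ m" "x $ m \<le> x $ p 0"
    by (auto intro: kuhn_simplex_mono[OF x])
  then show "0 \<le> x $ m \<and> x $ m \<le> 1"
    using x by (auto simp: kuhn_simplex_def)
qed

lemma sorting_enumeration_exists:
  fixes v :: "'n::finite \<Rightarrow> real"
  obtains p where "bij_betw p {..<CARD('n)} (UNIV :: 'n set)"
    "\<And>k. Suc k < CARD('n) \<Longrightarrow> v (p (Suc k)) \<le> v (p k)"
proof -
  obtain xs :: "'n list" where xs: "set xs = UNIV" "distinct xs"
    using finite_distinct_list[of "UNIV :: 'n set"] by auto
  define ys where "ys = sort_key (\<lambda>k. - v k) xs"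
  have ys: "set ys = UNIV" "distinct ys" "length ys = CARD('n)"
    using xs by (auto simp: ys_def distinct_card[symmetric])
  have sorted: "sorted (map (\<lambda>k. - v k) ys)"
    unfolding ys_def by (rule sorted_sort_key)
  show thesis
  proof
    show "bij_betw ((!) ys) {..<CARD('n)} UNIV"
      by (rule bij_betw_nth) (use ys in auto)
    show "v (ys ! Suc k) \<le> v (ys ! k)" if "Suc k < CARD('n)" for k
      using sorted_nth_mono[OF sorted, of k "Suc k"] that ys by simp
  qed
qed

lemma mem_kuhn_simplex_if_comonotone:
  assumes "\<And>k. Suc k < CARD('n) \<Longrightarrow> v (p (Suc k)) \<le> v (p k)"
    and "\<And>a b. v a \<le> v b \<Longrightarrow> y $ a \<le> y $ b"
    and "\<And>k. 0 \<le> y $ k \<and> y $ k \<le> 1"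
  shows "y \<in> kuhn_simplex (p :: nat \<Rightarrow> 'n::finite)"
proof -
  have "y $ p (Suc k) \<le> y $ p k" if "Suc k < CARD('n)" for k
    using assms(2)[OF assms(1)[OF that]] .
  then show ?thesis using assms(3) unfolding kuhn_simplex_def by blast
qed

lemma kuhn_at_covers_half_cube:
  fixes x :: "real^'n::finite"
  assumes x: "\<And>k. \<bar>x $ k - real_of_int (i $ k)\<bar> \<le> 1/2"
  shows "\<exists>T\<in>kuhn_at i. x \<in> T"
proof -
  define e :: "'n \<Rightarrow> int" where "e k = (if x $ k < real_of_int (i $ k) then 1 else 0)" for k
  define z where "z = (\<chi> k. i $ k - e k)"
  define u where "u = x - rvec z"
  have u: "e k = 1 \<Longrightarrow> 1/2 \<le> u $ k \<and> u $ k \<le> 1" "e k = 0 \<Longrightarrow> 0 \<le> u $ k \<and> u $ k \<le> 1/2"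
    "e k = 0 \<or> e k = 1" "0 \<le> u $ k \<and> u $ k \<le> 1" for k
    using x[of k] by (auto simp: u_def z_def e_def abs_le_iff split: if_splits)
  \<comment> \<open>Sorting by \<open>u + e\<close> sorts \<open>u\<close> and \<open>e\<close> simultaneously, also when \<open>u\<close> has ties at \<open>1/2\<close>.\<close>
  obtain p where p: "bij_betw p {..<CARD('n)} (UNIV :: 'n set)"
    and sorted: "\<And>k. Suc k < CARD('n) \<Longrightarrow> u $ p (Suc k) + e (p (Suc k)) \<le> u $ p k + e (p k)"
    using sorting_enumeration_exists[of "\<lambda>k. u $ k + e k"] by blast
  have "u \<in> kuhn_simplex p"
  proof (rule mem_kuhn_simplex_if_comonotone[where v = "\<lambda>k. u $ k + e k" and p = p, OF sorted])
    show "u $ a \<le> u $ b" if "u $ a + e a \<le> u $ b + e b" for a b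
      using that u[of a] u[of b] by auto
  qed (simp_all add: u(4))
  moreover have "rvec (\<chi> k. e k) \<in> kuhn_simplex p"
  proof (rule mem_kuhn_simplex_if_comonotone[where v = "\<lambda>k. u $ k + e k" and p = p, OF sorted])
    show "rvec (\<chi> k. e k) $ a \<le> rvec (\<chi> k. e k) $ b" if "u $ a + e a \<le> u $ b + e b" for a b
      using that u[of a] u[of b] by auto
    show "0 \<le> rvec (\<chi> k. e k) $ k \<and> rvec (\<chi> k. e k) $ k \<le> 1" for k
      using u(3)[of k] by auto
  qed simp
  moreover have "rvec i = rvec z + rvec (\<chi> k. e k)" "x = rvec z + u"
    by (simp_all add: vec_eq_iff z_def u_def)
  ultimately have "rvec i \<in> (\<lambda>y. rvec z + y) ` kuhn_simplex p" "x \<in> (\<lambda>y. rvec z + y) ` kuhn_simplex p"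
    by auto
  moreover have "(\<lambda>y. rvec z + y) ` kuhn_simplex p \<in> kuhn"
    unfolding kuhn_def using p by blast
  ultimately show ?thesis unfolding kuhn_at_def by blast
qed

lemma mem_kuhn_iff:
  "T \<in> kuhn \<longleftrightarrow> (\<exists>z p. bij_betw p {..<CARD('n)} (UNIV :: 'n::finite set) \<and>
     T = (\<lambda>x. rvec z + x) ` kuhn_simplex p)"
  by (auto simp: kuhn_def)

lemma kuhn_component_diff:
  fixes T :: "(real^'n::finite) set"
  assumes "T \<in> kuhn" "x \<in> T" "y \<in> T"
  shows "\<bar>x $ k - y $ k\<bar> \<le> 1"
proof -
  obtain z and p :: "nat \<Rightarrow> 'n" where p: "bij_betw p {..<CARD('n)} UNIV"
    and T: "T = (\<lambda>x. rvec z + x) ` kuhn_simplex p"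
    using assms(1) by (auto simp: mem_kuhn_iff)
  obtain x' y' where "x' \<in> cbox 0 1" "y' \<in> cbox 0 1" "x = rvec z + x'" "y = rvec z + y'"
    using assms(2,3) kuhn_simplex_subset_unit_cube[OF p] unfolding T by blast
  then have "x' $ k \<in> {0..1}" "y' $ k \<in> {0..1}" "x $ k - y $ k = x' $ k - y' $ k"
    by (simp_all add: mem_box_cart)
  then show ?thesis by (auto simp: abs_le_iff)
qed

lemma closed_kuhn_simplex: "closed (kuhn_simplex (p :: nat \<Rightarrow> 'n::finite))"
proof -
  have "closed {x :: real^'n. Suc k < CARD('n) \<longrightarrow> x $ p (Suc k) \<le> x $ p k}" for k
    by (cases "Suc k < CARD('n)") (auto intro!: closed_Collect_le continuous_intros)
  then show ?thesis unfolding kuhn_simplex_def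
    by (intro closed_Collect_conj closed_Collect_all closed_Collect_le continuous_intros)
qed

lemma compact_kuhn:
  fixes T :: "(real^'n::finite) set"
  assumes "T \<in> kuhn" shows "compact T"
proof -
  obtain z and p :: "nat \<Rightarrow> 'n" where p: "bij_betw p {..<CARD('n)} UNIV"
    and T: "T = (\<lambda>x. rvec z + x) ` kuhn_simplex p"
    using assms by (auto simp: mem_kuhn_iff)
  have "compact (kuhn_simplex p)"
    using closed_kuhn_simplex kuhn_simplex_subset_unit_cube[OF p]
    by (meson bounded_cbox bounded_subset compact_eq_bounded_closed)
  then show ?thesis unfolding T by (intro compact_continuous_image continuous_intros)
qed

lemma kuhn_simplex_restrict:
  "kuhn_simplex (restrict p {..<CARD('n)}) = kuhn_simplex (p :: nat \<Rightarrow> 'n::finite)"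
proof -
  have "CARD('n) - 1 < CARD('n)" "0 < CARD('n)" by simp_all
  then show ?thesis unfolding kuhn_simplex_def by (auto simp: Suc_lessD)
qed

lemma finite_kuhn_simplices:
  "finite {kuhn_simplex p | p. bij_betw p {..<CARD('n)} (UNIV :: 'n::finite set)}"
proof (rule finite_subset)
  show "{kuhn_simplex p | p. bij_betw p {..<CARD('n)} (UNIV :: 'n set)}
      \<subseteq> kuhn_simplex ` PiE {..<CARD('n)} (\<lambda>_. UNIV)"
  proof
    fix S assume "S \<in> {kuhn_simplex p | p. bij_betw p {..<CARD('n)} (UNIV :: 'n set)}"
    then obtain p :: "nat \<Rightarrow> 'n" where "S = kuhn_simplex (restrict p {..<CARD('n)})"
      by (auto simp: kuhn_simplex_restrict)
    moreover have "restrict p {..<CARD('n)} \<in> PiE {..<CARD('n)} (\<lambda>_. UNIV)" by simp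
    ultimately show "S \<in> kuhn_simplex ` PiE {..<CARD('n)} (\<lambda>_. UNIV)" by blast
  qed
qed (intro finite_imageI finite_PiE; simp)

lemma finite_kuhn_at: "finite (kuhn_at (i :: int^'n::finite))"
proof (rule finite_subset)
  let ?Z = "{z :: int^'n. \<forall>k. z $ k \<in> {i $ k - 1..i $ k}}"
  let ?S = "{kuhn_simplex p | p. bij_betw p {..<CARD('n)} (UNIV :: 'n set)}"
  show "kuhn_at i \<subseteq> (\<lambda>(z, S). (\<lambda>x. rvec z + x) ` S) ` (?Z \<times> ?S)"
  proof
    fix T assume T: "T \<in> kuhn_at i"
    then obtain z and p :: "nat \<Rightarrow> 'n" where p: "bij_betw p {..<CARD('n)} UNIV"
      and T_eq: "T = (\<lambda>x. rvec z + x) ` kuhn_simplex p"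
      by (auto simp: kuhn_at_def mem_kuhn_iff)
    obtain y where y: "y \<in> kuhn_simplex p" "rvec i = rvec z + y"
      using T unfolding kuhn_at_def T_eq by blast
    have "z \<in> ?Z"
    proof (simp, intro allI)
      fix k
      have "0 \<le> y $ k" "y $ k \<le> 1"
        using subsetD[OF kuhn_simplex_subset_unit_cube[OF p] y(1)] by (simp_all add: mem_box_cart)
      moreover have "real_of_int (i $ k) = real_of_int (z $ k) + y $ k"
        using arg_cong[OF y(2), of "\<lambda>v. v $ k"] by simp
      ultimately show "i $ k - 1 \<le> z $ k \<and> z $ k \<le> i $ k"
        by linarith
    qed
    then show "T \<in> (\<lambda>(z, S). (\<lambda>x. rvec z + x) ` S) ` (?Z \<times> ?S)"
      using p T_eq by blast
  qed
  show "finite ((\<lambda>(z, S). (\<lambda>x. rvec z + x) ` S) ` (?Z \<times> ?S))"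
    by (intro finite_imageI finite_cartesian_product finite_lattice_box finite_kuhn_simplices) simp
qed

lemma lmeasurable_zeta: "finite X \<Longrightarrow> zeta X \<in> lmeasurable"
  unfolding zeta_def using finite_kuhn_at compact_kuhn
  by (intro lmeasurable_compact compact_UN compact_Union) (auto simp: kuhn_at_def)

lemma lattice_cells_subset_zeta: "lattice_round -` X \<subseteq> zeta X"
proof
  fix x assume "x \<in> lattice_round -` X"
  moreover obtain T where "T \<in> kuhn_at (lattice_round x)" "x \<in> T"
    using kuhn_at_covers_half_cube abs_sub_lattice_round by blast
  ultimately show "x \<in> zeta X" unfolding zeta_def by blast
qed

definition lattice_cube :: "int^'n::finite \<Rightarrow> (int^'n) set" where
  "lattice_cube i = {j. \<forall>k. j $ k \<in> {i $ k - 1..i $ k + 1}}"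

lemma finite_lattice_cube: "finite (lattice_cube i)"
  unfolding lattice_cube_def by (rule finite_lattice_box) simp

lemma card_lattice_cube: "card (lattice_cube (i :: int^'n::finite)) = 3 ^ CARD('n)"
  unfolding lattice_cube_def by (subst card_lattice_box) simp_all

lemma zeta_subset_lattice_cells: "zeta X \<subseteq> lattice_round -` (\<Union>(lattice_cube ` X))"
proof
  fix y assume "y \<in> zeta X"
  then obtain i T where i: "i \<in> X" and T: "T \<in> kuhn" "rvec i \<in> T" "y \<in> T"
    unfolding zeta_def kuhn_at_def by blast
  have "lattice_round y \<in> lattice_cube i"
  proof (simp add: lattice_cube_def, intro allI)
    fix k
    have "\<bar>y $ k - real_of_int (i $ k)\<bar> \<le> 1"
      using kuhn_component_diff[OF T(1) T(3) T(2)] by simp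
    then have "\<bar>real_of_int (lattice_round y $ k) - real_of_int (i $ k)\<bar> < 2"
      using abs_sub_lattice_round[of y k] by linarith
    then show "i $ k - 1 \<le> lattice_round y $ k \<and> lattice_round y $ k \<le> i $ k + 1"
      by linarith
  qed
  then show "y \<in> lattice_round -` (\<Union>(lattice_cube ` X))" using i by blast
qed

section \<open>Perimeter and the cube neighbourhood\<close>

definition boundary_pairs :: "(int^'n::finite) set \<Rightarrow> ((int^'n) \<times> (int^'n)) set" where
  "boundary_pairs X = {(p, q). p \<in> X \<and> q \<notin> X \<and> norm (rvec p - rvec q) = 1}"

definition outer_boundary :: "(int^'n::finite) set \<Rightarrow> (int^'n) set" where
  "outer_boundary X = snd ` boundary_pairs X"

lemma boundary_pairs_eq_Sigma:
  "boundary_pairs X = Sigma X (\<lambda>p. {q. q \<notin> X \<and> norm (rvec p - rvec q) = 1})"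
  by (auto simp: boundary_pairs_def)

lemma finite_lattice_neighbours: "finite {q :: int^'n::finite. P q \<and> norm (rvec p - rvec q) = 1}"
  by (rule finite_subset[OF _ finite_lattice_cball[of "rvec p" 1]]) (auto simp: dist_norm)

lemma finite_boundary_pairs: "finite X \<Longrightarrow> finite (boundary_pairs X)"
  unfolding boundary_pairs_eq_Sigma by (intro finite_SigmaI finite_lattice_neighbours)

lemma Per_eq_card_boundary_pairs: "finite X \<Longrightarrow> Per X = card (boundary_pairs X)"
  unfolding Per_def val_def boundary_pairs_eq_Sigma
  by (subst card_SigmaI) (simp_all add: finite_lattice_neighbours)

lemma card_outer_boundary_le_Per: "finite X \<Longrightarrow> card (outer_boundary X) \<le> Per X"
  unfolding outer_boundary_def Per_eq_card_boundary_pairs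
  by (intro card_image_le finite_boundary_pairs)

lemma outer_boundary_covers_lattice_cube:
  fixes X :: "(int^'n::finite) set"
  shows "i \<in> X \<Longrightarrow> j \<in> lattice_cube i \<Longrightarrow> j \<notin> X \<Longrightarrow> \<exists>q\<in>outer_boundary X. j \<in> lattice_cube q"
proof (induction "card {k. i $ k \<noteq> j $ k}" arbitrary: i rule: less_induct)
  case less
  then obtain k where k: "i $ k \<noteq> j $ k" by (metis vec_eq_iff)
  \<comment> \<open>Walk from \<open>i\<close> towards \<open>j\<close> one coordinate at a time; the first step leaving \<open>X\<close>
    lands on the outer boundary, still next to \<open>j\<close>.\<close>
  define i' where "i' = i + axis k (j $ k - i $ k)"
  have "i $ k - 1 \<le> j $ k \<and> j $ k \<le> i $ k + 1"
    using less.prems(2) by (simp add: lattice_cube_def)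
  then have "\<bar>j $ k - i $ k\<bar> = 1" using k by arith
  then have adjacent: "norm (rvec i - rvec i') = 1"
    by (simp add: i'_def rvec_add norm_rvec_axis)
  have j_near_i': "j \<in> lattice_cube i'"
    using less.prems(2) by (auto simp: lattice_cube_def i'_def axis_def)
  show ?case
  proof (cases "i' \<in> X")
    case False
    then have "i' \<in> outer_boundary X"
      using adjacent less.prems(1) by (force simp: outer_boundary_def boundary_pairs_def image_iff)
    then show ?thesis using j_near_i' by blast
  next
    case True
    have "{m. i' $ m \<noteq> j $ m} \<subset> {m. i $ m \<noteq> j $ m}"
      using k by (auto simp: i'_def axis_def)
    then have "card {m. i' $ m \<noteq> j $ m} < card {m. i $ m \<noteq> j $ m}"
      by (rule psubset_card_mono[OF finite])
    then show ?thesis using less.hyps True j_near_i' less.prems(3) by blast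
  qed
qed

lemma card_lattice_cubes_diff_le_Per:
  fixes X :: "(int^'n::finite) set"
  assumes "finite X"
  shows "card (\<Union>(lattice_cube ` X) - X) \<le> 3 ^ CARD('n) * Per X"
proof -
  have fin: "finite (outer_boundary X)"
    unfolding outer_boundary_def using assms by (intro finite_imageI finite_boundary_pairs)
  have "\<Union>(lattice_cube ` X) - X \<subseteq> \<Union>(lattice_cube ` outer_boundary X)"
    using outer_boundary_covers_lattice_cube by blast
  then have "card (\<Union>(lattice_cube ` X) - X) \<le> card (\<Union>(lattice_cube ` outer_boundary X))"
    using fin by (intro card_mono) (auto intro: finite_lattice_cube)
  also have "\<dots> \<le> (\<Sum>q\<in>outer_boundary X. card (lattice_cube q))"
    by (rule card_UN_le[OF fin])
  also have "\<dots> = 3 ^ CARD('n) * card (outer_boundary X)"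
    by (simp add: card_lattice_cube)
  also have "\<dots> \<le> 3 ^ CARD('n) * Per X"
    using card_outer_boundary_le_Per[OF assms] by simp
  finally show ?thesis .
qed

section \<open>Discrete isoperimetric inequality\<close>

text \<open>\<open>drop_coord k ` X\<close> is in bijection with the lines parallel to the \<open>k\<close>-th axis that meet \<open>X\<close>.\<close>
definition drop_coord :: "'n::finite \<Rightarrow> int^'n \<Rightarrow> int^'n" where
  "drop_coord k v = (\<chi> m. if m = k then 0 else v $ m)"

lemma drop_coord_nth [simp]: "drop_coord k v $ m = (if m = k then 0 else v $ m)"
  by (simp add: drop_coord_def)

lemma drop_coord_commute: "drop_coord j (drop_coord k v) = drop_coord k (drop_coord j v)"
  by (simp add: vec_eq_iff)

lemma inj_on_drop_coord_slice:
  assumes "\<And>v. v \<in> S \<Longrightarrow> v $ k = t" shows "inj_on (drop_coord k) S"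
proof (rule inj_onI)
  fix u v assume uv: "u \<in> S" "v \<in> S" "drop_coord k u = drop_coord k v"
  have "u $ m = v $ m" for m
    using arg_cong[OF uv(3), of "\<lambda>w. w $ m"] assms[OF uv(1)] assms[OF uv(2)]
    by (cases "m = k") auto
  then show "u = v" by (simp add: vec_eq_iff)
qed

lemma line_has_top:
  fixes X :: "(int^'n::finite) set"
  assumes "finite X" "v \<in> X"
  shows "\<exists>p\<in>X. drop_coord k p = drop_coord k v \<and> p + axis k 1 \<notin> X"
proof -
  let ?L = "{u\<in>X. drop_coord k u = drop_coord k v}"
  have fin: "finite ((\<lambda>u. u $ k) ` ?L)" using assms(1) by simp
  obtain p where p: "p \<in> ?L" "p $ k = Max ((\<lambda>u. u $ k) ` ?L)"
    using Max_in[OF fin] assms(2) by fastforce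
  have "drop_coord k (p + axis k 1) = drop_coord k p"
    by (simp add: vec_eq_iff axis_def)
  moreover have "(p + axis k 1) $ k > Max ((\<lambda>u. u $ k) ` ?L)"
    using p(2) by simp
  ultimately have "p + axis k 1 \<notin> X"
    using p(1) Max_ge[OF fin] by fastforce
  then show ?thesis using p(1) by blast
qed

lemma sum_card_lines_le_Per:
  fixes X :: "(int^'n::finite) set"
  assumes X: "finite X"
  shows "(\<Sum>k\<in>UNIV. card (drop_coord k ` X)) \<le> Per X"
proof -
  define tops where "tops k = {p\<in>X. p + axis k 1 \<notin> X}" for k
  have "card (drop_coord k ` X) \<le> card (tops k)" for k
  proof -
    have "drop_coord k ` X \<subseteq> drop_coord k ` tops k"
    proof
      fix w assume "w \<in> drop_coord k ` X"
      then obtain v where v: "v \<in> X" "w = drop_coord k v" by blast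
      then obtain p where "p \<in> tops k" "drop_coord k p = w"
        using line_has_top[OF X] unfolding tops_def by blast
      then show "w \<in> drop_coord k ` tops k" by blast
    qed
    then have "card (drop_coord k ` X) \<le> card (drop_coord k ` tops k)"
      using X by (intro card_mono) (simp_all add: tops_def)
    also have "\<dots> \<le> card (tops k)"
      using X by (intro card_image_le) (simp add: tops_def)
    finally show ?thesis .
  qed
  then have "(\<Sum>k\<in>UNIV. card (drop_coord k ` X)) \<le> card (Sigma UNIV tops)"
    using X by (simp add: card_SigmaI tops_def sum_mono)
  also have "\<dots> = card ((\<lambda>(k, p). (p, p + axis k 1)) ` Sigma UNIV tops)"
    by (rule card_image[symmetric]) (auto simp: inj_on_def axis_eq_axis)
  also have "\<dots> \<le> card (boundary_pairs X)"
  proof (rule card_mono[OF finite_boundary_pairs[OF X]])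
    have "norm (rvec p - rvec (p + axis k 1)) = 1" for p and k :: 'n
      by (simp add: rvec_add norm_rvec_axis)
    then show "(\<lambda>(k, p). (p, p + axis k 1)) ` Sigma UNIV tops \<subseteq> boundary_pairs X"
      by (auto simp: tops_def boundary_pairs_def)
  qed
  finally show ?thesis using Per_eq_card_boundary_pairs[OF X] by simp
qed

lemma card_eq_sum_card_fibres: "finite S \<Longrightarrow> card S = (\<Sum>y\<in>f ` S. card {x\<in>S. f x = y})"
  unfolding card_eq_sum by (rule sum.image_gen)

lemma card_slice_le_card_lines:
  assumes "finite X"
  shows "card {v\<in>X. v $ k = t} \<le> card (drop_coord k ` X)"
proof -
  have "card {v\<in>X. v $ k = t} = card (drop_coord k ` {v\<in>X. v $ k = t})"
    by (rule card_image[symmetric], rule inj_on_drop_coord_slice) simp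
  also have "\<dots> \<le> card (drop_coord k ` X)"
    using assms by (intro card_mono) auto
  finally show ?thesis .
qed

lemma card_lines_eq_sum_slices:
  assumes "finite X" "j \<noteq> k"
  shows "card (drop_coord j ` X) = (\<Sum>t\<in>(\<lambda>v. v $ k) ` X. card (drop_coord j ` {v\<in>X. v $ k = t}))"
proof -
  have "(\<lambda>w. w $ k) ` drop_coord j ` X = (\<lambda>v. v $ k) ` X"
    "{w \<in> drop_coord j ` X. w $ k = t} = drop_coord j ` {v\<in>X. v $ k = t}" for t
    using assms(2) by (auto simp: image_image)
  then show ?thesis
    using card_eq_sum_card_fibres[of "drop_coord j ` X" "\<lambda>w. w $ k"] assms(1) by simp
qed

lemma card_lines_drop_coord_slice:
  assumes "j \<noteq> k" "\<And>v. v \<in> S \<Longrightarrow> v $ k = t"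
  shows "card (drop_coord j ` drop_coord k ` S) = card (drop_coord j ` S)"
proof -
  have "drop_coord j ` drop_coord k ` S = drop_coord k ` drop_coord j ` S"
    by (simp add: image_image drop_coord_commute)
  also have "card \<dots> = card (drop_coord j ` S)"
    by (rule card_image, rule inj_on_drop_coord_slice[where t = t]) (use assms in auto)
  finally show ?thesis .
qed

lemma sum_pow_le_of_slices:
  fixes n s :: "'a \<Rightarrow> real"
  assumes T: "finite T" and m: "m \<ge> 1" and a: "0 \<le> a"
    and slices: "\<And>t. t \<in> T \<Longrightarrow> 0 \<le> n t \<and> n t \<le> a \<and> 0 \<le> s t \<and> n t ^ (m - 1) \<le> s t ^ m"
  shows "(\<Sum>t\<in>T. n t) ^ m \<le> (a + (\<Sum>t\<in>T. s t)) ^ Suc m"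
proof -
  have m0: "0 < m" using m by simp
  \<comment> \<open>\<open>n t = n t ^ (1/m) * n t ^ ((m - 1)/m) \<le> a ^ (1/m) * s t\<close>\<close>
  have slice_bound: "n t \<le> root m a * s t" if t: "t \<in> T" for t
  proof -
    have "n t ^ m = n t * n t ^ (m - 1)" using m0 by (metis Suc_diff_1 power_Suc)
    also have "\<dots> \<le> a * s t ^ m" using slices[OF t] by (intro mult_mono) auto
    finally have "root m (n t ^ m) \<le> root m (a * s t ^ m)"
      using m0 by (rule real_root_le_mono[rotated])
    then show ?thesis using slices[OF t] m0 by (simp add: real_root_power_cancel real_root_mult)
  qed
  let ?S = "\<Sum>t\<in>T. s t"
  have S0: "0 \<le> ?S" using slices by (simp add: sum_nonneg)
  have "(\<Sum>t\<in>T. n t) \<le> root m a * ?S"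
    unfolding sum_distrib_left by (rule sum_mono) (rule slice_bound)
  then have "(\<Sum>t\<in>T. n t) ^ m \<le> (root m a * ?S) ^ m"
    using slices by (intro power_mono) (auto intro: sum_nonneg)
  also have "\<dots> = a * ?S ^ m" using m0 a by (simp add: power_mult_distrib)
  also have "\<dots> \<le> (a + ?S) * (a + ?S) ^ m" using a S0 by (intro mult_mono power_mono) auto
  finally show ?thesis by simp
qed

lemma card_pow_le_sum_lines_pow_supported:
  fixes I :: "'n::finite set"
  assumes "finite I" "I \<noteq> {}"
  shows "finite X \<Longrightarrow> X \<noteq> {} \<Longrightarrow> (\<forall>v\<in>X. \<forall>m. m \<notin> I \<longrightarrow> v $ m = 0) \<Longrightarrow>
    real (card X) ^ (card I - 1) \<le> real (\<Sum>j\<in>I. card (drop_coord j ` X)) ^ card I"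
  using assms
proof (induction I arbitrary: X rule: finite_ne_induct)
  case (singleton k)
  then have "card (drop_coord k ` X) \<ge> 1" by (simp add: Suc_leI card_gt_0_iff)
  then show ?case by simp
next
  case (insert k F)
  define T where "T = (\<lambda>v. v $ k) ` X"
  define slice where "slice t = {v\<in>X. v $ k = t}" for t
  define s where "s t = (\<Sum>j\<in>F. card (drop_coord j ` slice t))" for t
  have k_notin: "j \<in> F \<Longrightarrow> j \<noteq> k" for j using insert.hyps by auto
  have card_X: "card X = (\<Sum>t\<in>T. card (slice t))"
    unfolding T_def slice_def by (rule card_eq_sum_card_fibres[OF insert.prems(1)])
  have sum_lines: "(\<Sum>j\<in>insert k F. card (drop_coord j ` X)) = card (drop_coord k ` X) + (\<Sum>t\<in>T. s t)"
  proof -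
    have "(\<Sum>j\<in>F. card (drop_coord j ` X)) = (\<Sum>j\<in>F. \<Sum>t\<in>T. card (drop_coord j ` slice t))"
      unfolding T_def slice_def
      by (intro sum.cong refl card_lines_eq_sum_slices[OF insert.prems(1) k_notin])
    then show ?thesis
      using insert.hyps by (simp add: s_def sum.swap[of _ T])
  qed
  have slice_IH: "real (card (slice t)) ^ (card F - 1) \<le> real (s t) ^ card F" if t: "t \<in> T" for t
  proof -
    let ?Y = "drop_coord k ` slice t"
    have "real (card ?Y) ^ (card F - 1) \<le> real (\<Sum>j\<in>F. card (drop_coord j ` ?Y)) ^ card F"
      using t insert.prems(1,3) by (intro insert.IH) (auto simp: T_def slice_def)
    moreover have "card ?Y = card (slice t)"
      by (rule card_image, rule inj_on_drop_coord_slice) (simp add: slice_def)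
    moreover have "(\<Sum>j\<in>F. card (drop_coord j ` ?Y)) = s t"
      unfolding s_def by (intro sum.cong refl card_lines_drop_coord_slice[where t = t] k_notin) (auto simp: slice_def)
    ultimately show ?thesis by simp
  qed
  have slice_le: "card (slice t) \<le> card (drop_coord k ` X)" for t
    unfolding slice_def by (rule card_slice_le_card_lines[OF insert.prems(1)])
  have "(\<Sum>t\<in>T. real (card (slice t))) ^ card F
      \<le> (real (card (drop_coord k ` X)) + (\<Sum>t\<in>T. real (s t))) ^ Suc (card F)"
  proof (rule sum_pow_le_of_slices)
    show "finite T" using insert.prems(1) by (simp add: T_def)
    show "1 \<le> card F" using insert.hyps by (simp add: Suc_leI card_gt_0_iff)
  qed (use slice_IH slice_le in auto)
  then show ?case using card_X sum_lines insert.hyps by simp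
qed

lemma card_pow_le_sum_lines_pow:
  fixes X :: "(int^'n::finite) set"
  assumes "finite X" "X \<noteq> {}"
  shows "real (card X) ^ (CARD('n) - 1) \<le> real (\<Sum>k\<in>UNIV. card (drop_coord k ` X)) ^ CARD('n)"
  using card_pow_le_sum_lines_pow_supported[of "UNIV :: 'n set" X] assms by simp

lemma card_pow_le_Per_pow:
  fixes X :: "(int^'n::finite) set"
  assumes "finite X" "X \<noteq> {}"
  shows "real (card X) ^ (CARD('n) - 1) \<le> real (Per X) ^ CARD('n)"
  using card_pow_le_sum_lines_pow[OF assms] sum_card_lines_le_Per[OF assms(1)]
  by (meson of_nat_0_le_iff of_nat_le_iff order_trans power_mono)

section \<open>Cells straddling a sphere\<close>

lemma dist_le_card_if_same_cell:
  fixes x y :: "real^'n::finite"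
  assumes "lattice_round x = lattice_round y"
  shows "dist x y \<le> real CARD('n)"
proof -
  have "\<bar>(x - y) $ k\<bar> \<le> 1" for k
  proof -
    have "\<bar>x $ k - real_of_int (lattice_round x $ k)\<bar> \<le> 1/2"
      "\<bar>y $ k - real_of_int (lattice_round x $ k)\<bar> \<le> 1/2"
      using abs_sub_lattice_round[of x k] abs_sub_lattice_round[of y k] assms by simp_all
    then show ?thesis by (simp; arith)
  qed
  then have "(\<Sum>k\<in>UNIV. \<bar>(x - y) $ k\<bar>) \<le> real CARD('n)"
    using sum_mono[of UNIV "\<lambda>k. \<bar>(x - y) $ k\<bar>" "\<lambda>_. 1"] by simp
  then show ?thesis using norm_le_l1_cart[of "x - y"] by (simp add: dist_norm)
qed

definition straddling_cells :: "(real^'n::finite) set \<Rightarrow> (int^'n) set" where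
  "straddling_cells B = {i. \<exists>x y. lattice_round x = i \<and> lattice_round y = i \<and> x \<in> B \<and> y \<notin> B}"

lemma symdiff_lattice_points_subset_straddling_cells:
  "symdiff B (lattice_round -` {i. rvec i \<in> B}) \<subseteq> lattice_round -` straddling_cells B"
proof
  fix x assume "x \<in> symdiff B (lattice_round -` {i. rvec i \<in> B})"
  then have "x \<in> B \<and> rvec (lattice_round x) \<notin> B \<or> rvec (lattice_round x) \<in> B \<and> x \<notin> B"
    by (auto simp: symdiff_def)
  moreover have "lattice_round (rvec (lattice_round x)) = lattice_round x" by simp
  ultimately show "x \<in> lattice_round -` straddling_cells B"
    unfolding straddling_cells_def by blast
qed

lemma finite_straddling_cells:
  fixes B :: "(real^'n::finite) set"
  assumes "bounded B" shows "finite (straddling_cells B)"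
proof -
  obtain R where R: "\<forall>x\<in>B. dist 0 x \<le> R"
    using assms unfolding bounded_any_center[of B 0] by blast
  have "rvec i \<in> cball 0 (R + real CARD('n))" if i: "i \<in> straddling_cells B" for i
  proof -
    obtain x where x: "x \<in> B" "lattice_round x = i"
      using i by (auto simp: straddling_cells_def)
    have "dist x (rvec i) \<le> real CARD('n)"
      using x(2) by (intro dist_le_card_if_same_cell) simp
    moreover have "dist 0 x \<le> R" using R x(1) by blast
    ultimately show ?thesis using dist_triangle[of 0 "rvec i" x] by simp
  qed
  then have "straddling_cells B \<subseteq> {i. rvec i \<in> cball 0 (R + real CARD('n))}" by blast
  then show ?thesis using finite_lattice_cball finite_subset by blast
qed

lemma straddling_cell_subset_annulus:
  fixes c :: "real^'n::finite"
  assumes "i \<in> straddling_cells (cball c r)"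
  shows "lattice_round -` {i} \<subseteq> cball c (r + real CARD('n)) - ball c (r - real CARD('n))"
proof
  fix w assume w: "w \<in> lattice_round -` {i}"
  obtain x y where xy: "lattice_round x = i" "lattice_round y = i" "dist c x \<le> r" "dist c y > r"
    using assms by (auto simp: straddling_cells_def)
  have "dist x w \<le> real CARD('n)" "dist w y \<le> real CARD('n)"
    using w xy by (auto intro!: dist_le_card_if_same_cell)
  then show "w \<in> cball c (r + real CARD('n)) - ball c (r - real CARD('n))"
    using xy dist_triangle[of c w x] dist_triangle[of c y w] by (auto simp: dist_commute)
qed

lemma power_diff_le_mult:
  fixes a b :: real
  assumes "0 \<le> a" "a \<le> b"
  shows "b ^ n - a ^ n \<le> real n * b ^ (n - 1) * (b - a)"
proof (induction n)
  case (Suc n)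
  have "b ^ Suc n - a ^ Suc n = b * (b ^ n - a ^ n) + a ^ n * (b - a)"
    by (simp add: algebra_simps)
  also have "\<dots> \<le> b * (real n * b ^ (n - 1) * (b - a)) + b ^ n * (b - a)"
    using Suc assms by (intro add_mono mult_left_mono mult_right_mono power_mono) auto
  also have "b * (real n * b ^ (n - 1) * (b - a)) = real n * b ^ n * (b - a)"
    by (cases n) auto
  finally show ?case by (simp add: algebra_simps)
qed simp

lemma card_straddling_cells_cball:
  fixes c :: "real^'n::finite"
  assumes r: "0 \<le> r"
  shows "real (card (straddling_cells (cball c r)))
    \<le> 2 * real CARD('n) ^ 2 * unit_ball_vol (real CARD('n)) * (r + real CARD('n)) ^ (CARD('n) - 1)"
proof -
  let ?d = "CARD('n)" and ?\<omega> = "unit_ball_vol (real CARD('n))"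
  let ?b = "r + real ?d" and ?a = "max (r - real ?d) 0"
  have fin: "finite (straddling_cells (cball c r))" by (simp add: finite_straddling_cells)
  have "real (card (straddling_cells (cball c r))) = measure lebesgue (lattice_round -` straddling_cells (cball c r))"
    using measure_lattice_cells[OF fin] by simp
  also have "\<dots> \<le> measure lebesgue (cball c ?b - ball c (r - real ?d))"
  proof (rule measure_mono_fmeasurable)
    show "lattice_round -` straddling_cells (cball c r) \<subseteq> cball c ?b - ball c (r - real ?d)"
      using straddling_cell_subset_annulus[of _ c r] by blast
  qed (auto intro: fmeasurableD lmeasurable_lattice_cells[OF fin])
  also have "\<dots> = measure lebesgue (cball c ?b) - measure lebesgue (ball c (r - real ?d))"
    by (rule measurable_measure_Diff) auto
  also have "measure lebesgue (ball c (r - real ?d)) = ?\<omega> * ?a ^ ?d"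
    by (cases "r - real ?d \<ge> 0") (simp_all add: content_ball ball_empty)
  also have "measure lebesgue (cball c ?b) = ?\<omega> * ?b ^ ?d"
    using r by (simp add: content_cball)
  also have "?\<omega> * ?b ^ ?d - ?\<omega> * ?a ^ ?d \<le> ?\<omega> * (real ?d * ?b ^ (?d - 1) * (?b - ?a))"
    unfolding right_diff_distrib[symmetric] using r by (intro mult_left_mono power_diff_le_mult) auto
  also have "\<dots> \<le> ?\<omega> * (real ?d * ?b ^ (?d - 1) * (2 * real ?d))"
    using r by (intro mult_left_mono mult_right_mono) auto
  finally show ?thesis by (simp add: power2_eq_square algebra_simps)
qed

lemma measure_symdiff_triangle:
  assumes "A \<in> lmeasurable" "B \<in> lmeasurable" "C \<in> lmeasurable"
  shows "measure lebesgue (symdiff A C) \<le> measure lebesgue (symdiff A B) + measure lebesgue (symdiff B C)"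
proof -
  have "measure lebesgue (symdiff A C) \<le> measure lebesgue (symdiff A B \<union> symdiff B C)"
    using assms by (intro measure_mono_fmeasurable) (auto simp: symdiff_def)
  also have "\<dots> \<le> measure lebesgue (symdiff A B) + measure lebesgue (symdiff B C)"
    using assms by (intro measure_Un_le) (auto simp: symdiff_def)
  finally show ?thesis .
qed

lemma measure_symdiff_cells_zeta_le:
  assumes "finite X"
  shows "measure lebesgue (symdiff (lattice_round -` X) (zeta X)) \<le> real (card (\<Union>(lattice_cube ` X) - X))"
proof -
  let ?E = "\<Union>(lattice_cube ` X) - X"
  have E: "finite ?E" using assms by (intro finite_Diff finite_UN_I finite_lattice_cube)
  have "symdiff (lattice_round -` X) (zeta X) \<subseteq> lattice_round -` ?E"
    using lattice_cells_subset_zeta[of X] zeta_subset_lattice_cells[of X] by (auto simp: symdiff_def)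
  then show ?thesis
    using lmeasurable_lattice_cells[OF E] lmeasurable_lattice_cells[OF assms] lmeasurable_zeta[OF assms]
    by (subst measure_lattice_cells[OF E, symmetric], intro measure_mono_fmeasurable)
      (auto simp: symdiff_def intro: fmeasurableD)
qed

lemma measure_symdiff_lattice_points_le:
  assumes "bounded B" "B \<in> sets lebesgue"
  shows "measure lebesgue (symdiff B (lattice_round -` {i. rvec i \<in> B})) \<le> real (card (straddling_cells B))"
proof -
  have Y: "finite {i. rvec i \<in> B}" and K: "finite (straddling_cells B)"
    using assms(1) by (rule finite_lattice_points_bounded, rule finite_straddling_cells)
  show ?thesis
    using symdiff_lattice_points_subset_straddling_cells[of B] bounded_set_imp_lmeasurable[OF assms]
      lmeasurable_lattice_cells[OF K] lmeasurable_lattice_cells[OF Y]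
    by (subst measure_lattice_cells[OF K, symmetric], intro measure_mono_fmeasurable)
      (auto simp: symdiff_def intro: fmeasurableD)
qed

lemma card_symdiff_lattice_points_le:
  fixes X :: "(int^'n::finite) set" and B :: "(real^'n) set"
  assumes X: "finite X" and B: "bounded B" "B \<in> sets lebesgue"
  shows "real (card (symdiff X {i. rvec i \<in> B}))
    \<le> measure lebesgue (symdiff (zeta X) B) + real (card (straddling_cells B)) + 3 ^ CARD('n) * real (Per X)"
proof -
  define Y where "Y = {i. rvec i \<in> B}"
  have Y: "finite Y"
    unfolding Y_def using B(1) by (rule finite_lattice_points_bounded)
  have "real (card (symdiff X Y)) = measure lebesgue (symdiff (lattice_round -` X) (lattice_round -` Y))"
    using measure_lattice_cells[of "symdiff X Y"] X Y by (simp add: symdiff_def vimage_Un vimage_Diff)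
  also have "\<dots> \<le> measure lebesgue (symdiff (lattice_round -` X) (zeta X))
      + measure lebesgue (symdiff (zeta X) B) + measure lebesgue (symdiff B (lattice_round -` Y))"
    using measure_symdiff_triangle[of "lattice_round -` X" "zeta X" "lattice_round -` Y"]
      measure_symdiff_triangle[of "zeta X" B "lattice_round -` Y"]
      lmeasurable_lattice_cells X Y lmeasurable_zeta[OF X] bounded_set_imp_lmeasurable[OF B]
    by fastforce
  also have "measure lebesgue (symdiff (lattice_round -` X) (zeta X)) \<le> real (card (\<Union>(lattice_cube ` X) - X))"
    by (rule measure_symdiff_cells_zeta_le[OF X])
  also have "\<dots> \<le> real (3 ^ CARD('n) * Per X)"
    using card_lattice_cubes_diff_le_Per[OF X] by (simp only: of_nat_le_iff)
  also have "\<dots> = 3 ^ CARD('n) * real (Per X)" by simp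
  also have "measure lebesgue (symdiff B (lattice_round -` Y)) \<le> real (card (straddling_cells B))"
    unfolding Y_def by (rule measure_symdiff_lattice_points_le[OF B])
  finally show ?thesis unfolding Y_def by linarith
qed

lemma power_add_le_mult:
  fixes r a :: real
  assumes "0 \<le> r" "0 \<le> a"
  shows "(r + a) ^ n \<le> (1 + a) ^ n * (1 + r ^ n)"
proof -
  have "(r + a) ^ n \<le> ((1 + a) * max 1 r) ^ n"
    using assms by (intro power_mono) (auto simp: max_def algebra_simps mult_le_cancel_left1)
  also have "\<dots> = (1 + a) ^ n * max 1 r ^ n" by (simp add: power_mult_distrib)
  also have "max 1 r ^ n \<le> 1 + r ^ n"
    using assms by (cases "r \<le> 1") (auto simp: max_def)
  finally show ?thesis using assms by (simp add: mult_left_mono)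
qed

lemma power_pred_le_root_mult:
  fixes r w P :: real
  assumes "0 < d" "0 \<le> r" "0 < w" "0 \<le> P" and bound: "(w * r ^ d) ^ (d - 1) \<le> P ^ d"
  shows "r ^ (d - 1) \<le> root d (1 / w ^ (d - 1)) * P"
proof -
  have "(r ^ (d - 1)) ^ d = (w * r ^ d) ^ (d - 1) / w ^ (d - 1)"
    using assms(3) by (simp add: power_mult_distrib flip: power_mult) (simp add: mult.commute)
  also have "\<dots> \<le> P ^ d / w ^ (d - 1)"
    using bound assms(3) by (simp add: divide_right_mono)
  also have "\<dots> = (root d (1 / w ^ (d - 1)) * P) ^ d"
    using assms(1,3) by (simp add: power_mult_distrib)
  finally have "(r ^ (d - 1)) ^ d \<le> (root d (1 / w ^ (d - 1)) * P) ^ d" .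
  moreover have "0 \<le> root d (1 / w ^ (d - 1)) * P"
    using assms(3,4) by (simp add: real_root_ge_zero)
  ultimately show ?thesis using assms(1,2) by simp
qed

lemma card_straddling_cells_le_Per:
  obtains A :: real where "0 \<le> A"
    "\<And>(X :: (int^'n::finite) set) (c :: real^'n) r. finite X \<Longrightarrow> X \<noteq> {} \<Longrightarrow> 0 \<le> r \<Longrightarrow>
       unit_ball_vol (real CARD('n)) * r ^ CARD('n) = real (card X) \<Longrightarrow>
       real (card (straddling_cells (cball c r))) \<le> A * real (Per X)"
proof
  let ?d = "CARD('n)" and ?\<omega> = "unit_ball_vol (real CARD('n))"
  define \<kappa> where "\<kappa> = root ?d (1 / ?\<omega> ^ (?d - 1))"
  have \<kappa>: "0 \<le> \<kappa>" by (simp add: \<kappa>_def real_root_ge_zero)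
  show "0 \<le> 2 * real ?d ^ 2 * ?\<omega> * (1 + real ?d) ^ (?d - 1) * (1 + \<kappa>)"
    using \<kappa> by simp
  fix X :: "(int^'n) set" and c :: "real^'n" and r
  assume X: "finite X" "X \<noteq> {}" and r: "0 \<le> r" and vol: "?\<omega> * r ^ ?d = real (card X)"
  let ?P = "real (Per X)"
  have iso: "(?\<omega> * r ^ ?d) ^ (?d - 1) \<le> ?P ^ ?d"
    using card_pow_le_Per_pow[OF X] vol by simp
  have "1 \<le> ?P"
  proof -
    have "1 \<le> real (card X)" using X by (simp add: Suc_leI card_gt_0_iff)
    then have "1 ^ ?d \<le> ?P ^ ?d"
      using iso vol by (metis one_le_power order_trans power_one)
    then show ?thesis by (simp del: power_one)
  qed
  have "r ^ (?d - 1) \<le> \<kappa> * ?P"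
    unfolding \<kappa>_def using iso r by (intro power_pred_le_root_mult) auto
  then have "1 + r ^ (?d - 1) \<le> (1 + \<kappa>) * ?P"
    using \<open>1 \<le> ?P\<close> by (simp add: algebra_simps)
  have "real (card (straddling_cells (cball c r)))
      \<le> 2 * real ?d ^ 2 * ?\<omega> * (r + real ?d) ^ (?d - 1)"
    by (rule card_straddling_cells_cball[OF r])
  also have "(r + real ?d) ^ (?d - 1) \<le> (1 + real ?d) ^ (?d - 1) * (1 + r ^ (?d - 1))"
    using r by (intro power_add_le_mult) simp_all
  also have "\<dots> \<le> (1 + real ?d) ^ (?d - 1) * ((1 + \<kappa>) * ?P)"
    using \<open>1 + r ^ (?d - 1) \<le> (1 + \<kappa>) * ?P\<close> by (intro mult_left_mono) simp_all
  finally show "real (card (straddling_cells (cball c r)))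
      \<le> 2 * real ?d ^ 2 * ?\<omega> * (1 + real ?d) ^ (?d - 1) * (1 + \<kappa>) * ?P"
    by (simp add: mult_left_mono ac_simps)
qed

lemma rN_spec:
  "0 \<le> rN TYPE('n::finite) N \<and> unit_ball_vol (real CARD('n)) * rN TYPE('n) N ^ CARD('n) = real N"
proof -
  let ?d = "CARD('n)" and ?\<omega> = "unit_ball_vol (real CARD('n))"
  have spec_iff: "(0 \<le> r \<and> measure lebesgue (cball (0 :: real^'n) r) = real N)
      \<longleftrightarrow> 0 \<le> r \<and> ?\<omega> * r ^ ?d = real N" for r
    using content_cball[of r "0 :: real^'n"] by auto
  have \<omega>: "?\<omega> \<noteq> 0" using unit_ball_vol_pos[of "real ?d"] by linarith
  define r0 where "r0 = root ?d (real N / ?\<omega>)"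
  have r0: "0 \<le> r0 \<and> ?\<omega> * r0 ^ ?d = real N"
    using \<omega> by (simp add: r0_def real_root_ge_zero)
  have unique: "r = r0" if "0 \<le> r \<and> ?\<omega> * r ^ ?d = real N" for r
  proof (rule power_eq_imp_eq_base)
    show "r ^ ?d = r0 ^ ?d" using that r0 \<omega> by (metis mult_cancel_left)
  qed (use that r0 in simp_all)
  have "0 \<le> (THE r. 0 \<le> r \<and> ?\<omega> * r ^ ?d = real N) \<and>
      ?\<omega> * (THE r. 0 \<le> r \<and> ?\<omega> * r ^ ?d = real N) ^ ?d = real N"
    using r0 unique by (rule theI)
  then show ?thesis unfolding rN_def spec_iff .
qed

lemma powr_mult_PerN:
  assumes "1 \<le> N"
  shows "real N powr ((real CARD('n) - 1) / real CARD('n)) * PerN N X = real (Per (X :: (int^'n::finite) set))"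
proof -
  let ?a = "(real CARD('n) - 1) / real CARD('n)"
  have "- (real CARD('n) - 1) / real CARD('n) = - ?a" by (simp only: minus_divide_left)
  then have "PerN N X = inverse (real N powr ?a) * real (Per X)"
    unfolding PerN_def by (simp only: powr_minus)
  then show ?thesis using assms by simp
qed

lemma translate_lattice_points_cball:
  "(\<lambda>b. z + b) ` {b. rvec b \<in> cball 0 r} = {i :: int^'n::finite. rvec i \<in> cball (rvec z) r}"
proof (rule set_eqI)
  fix i :: "int^'n"
  have "i \<in> (\<lambda>b. z + b) ` {b. rvec b \<in> cball 0 r} \<longleftrightarrow> rvec (i - z) \<in> cball 0 r"
    by (auto simp: image_iff intro: exI[of _ "i - z"])
  also have "\<dots> \<longleftrightarrow> rvec i \<in> cball (rvec z) r"
    by (simp add: rvec_diff dist_norm norm_minus_commute)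
  finally show "i \<in> (\<lambda>b. z + b) ` {b. rvec b \<in> cball 0 r} \<longleftrightarrow> i \<in> {i. rvec i \<in> cball (rvec z) r}"
    by simp
qed

theorem lemma4p8:
  assumes "CARD('n::finite) \<ge> 2"
  shows "\<exists>C>0. \<forall>N::nat. N \<ge> 1 \<longrightarrow> (\<forall>X \<in> (XN N :: (int ^ 'n) set set). \<forall>z :: int ^ 'n.
     real (card (symdiff X ((\<lambda>b. z + b) ` {b. rvec b \<in> cball (0 :: real ^ 'n) (rN TYPE('n) N)})))
       \<le> measure lebesgue (symdiff (zeta X) ((\<lambda>x. x + rvec z) ` cball (0 :: real ^ 'n) (rN TYPE('n) N)))
         + C * real N powr ((real CARD('n) - 1) / real CARD('n)) * PerN N X)"
proof -
  obtain A where A: "0 \<le> A" and straddling: "\<And>(X :: (int^'n) set) (c :: real^'n) r. finite X \<Longrightarrow> X \<noteq> {} \<Longrightarrow> 0 \<le> r \<Longrightarrow>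
       unit_ball_vol (real CARD('n)) * r ^ CARD('n) = real (card X) \<Longrightarrow>
       real (card (straddling_cells (cball c r))) \<le> A * real (Per X)"
    using card_straddling_cells_le_Per[where 'n = 'n] by blast
  have "real (card (symdiff X ((\<lambda>b. z + b) ` {b. rvec b \<in> cball 0 (rN TYPE('n) N)})))
       \<le> measure lebesgue (symdiff (zeta X) ((\<lambda>x. x + rvec z) ` cball 0 (rN TYPE('n) N)))
         + (A + 3 ^ CARD('n)) * real N powr ((real CARD('n) - 1) / real CARD('n)) * PerN N X"
    if N: "N \<ge> 1" and "X \<in> XN N" for N X and z :: "int^'n"
  proof -
    let ?r = "rN TYPE('n) N"
    have X: "finite X" "card X = N" "X \<noteq> {}" using that by (auto simp: XN_def)
    have ball: "(\<lambda>x. x + rvec z) ` cball 0 ?r = cball (rvec z) ?r"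
      using cball_translation[of "rvec z" 0 ?r] by (simp add: add.commute)
    show ?thesis
      using card_symdiff_lattice_points_le[OF X(1), of "cball (rvec z) ?r"]
        straddling[OF X(1,3), of ?r "rvec z"] rN_spec[where 'n='n and N=N] X(2)
      unfolding translate_lattice_points_cball ball mult.assoc[of "A + _"] powr_mult_PerN[OF N] by (auto simp: algebra_simps)
  qed
  moreover have "A + 3 ^ CARD('n) > 0" using A by (intro add_nonneg_pos) simp_all
  ultimately show ?thesis by blast
qed

end
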